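(* Let $X$ and $V$ be independent random variables, where $V\sim\mathcal N(0,\sigma^2)$ and $X\le_{df}(d,w,o)$ for some nonzero $d$ and nonnegative $w,o$ with $|d|>w$. Then $$\mathbb E[(X-Q_d(X+V))^2]\le\mathbb E[(X-Q_d(X))^2]+\sum_{i=1}^{\infty}\Big(i|d|+\frac w2\Big)^2\cdot 2Q\Big(\frac{(2i-1)|d|-w}{2\sigma}\Big)+o\cdot\Big(\big(d+\tfrac d2\big)^2+\sum_{i=2}^{\infty}\big(id+\tfrac d2\big)^2\cdot 2Q\Big(\frac{(i-1)|d|}{\sigma}\Big)\Big).$$
   Context: For $x\neq0$ and real $y$, $Q_x(y)=x\lfloor y/x+1/2\rfloor$ (quantization) and $R_x(y)=y-Q_x(y)$. The unsubscripted $Q$ denotes the Gaussian tail function $Q(x)=\frac1{\sqrt{2\pi}}\int_x^\infty e^{-u^2/2}\,du$. For a random variable $X$, nonzero $d$ and nonnegative reals $w,o$ with $|d|>w$, write $X\le_{df}(d,w,o)$ if $\mathbb P\{X\notin\bigcup_{i\in\mathbb Z}[id-\frac w2,id+\frac w2]\}\le o$. *)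

theory Defs
  imports "HOL-Probability.Probability"
begin

definition quant :: "real \<Rightarrow> real \<Rightarrow> real" where
  "quant x y = x * real_of_int \<lfloor>y / x + 1/2\<rfloor>"

definition gaussQ :: "real \<Rightarrow> real" where
  "gaussQ x = (1 / sqrt (2 * pi)) * (LBINT u:{x..}. exp (- (u\<^sup>2) / 2))"

definition df_le :: "'a measure \<Rightarrow> ('a \<Rightarrow> real) \<Rightarrow> real \<Rightarrow> real \<Rightarrow> real \<Rightarrow> bool" where
  "df_le M X d w ov \<longleftrightarrow>
     measure M {\<omega> \<in> space M. X \<omega> \<notin> (\<Union>i::int. {real_of_int i * d - w/2 .. real_of_int i * d + w/2})} \<le> ov"

end

theory Submission
  imports Defs
begin

(*
  If the noise v moves x + v into the k-th neighbouring quantization cell (k ~= 0), the error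
  grows to at most |k| |d| + |R_d(x)|, while |v| >= (|k| - 1/2) |d| - |R_d(x)| because
  |R_d(x + v)| <= |d|/2. Near the grid |R_d(x)| <= w/2, elsewhere only |R_d(x)| <= |d|/2.
  This bounds the squared error pointwise by R_d(x)^2 plus a series of tail indicators of |v|,
  those of the off-grid part multiplied by the indicator of x being off the grid. Integrating,
  independence of X and V turns the off-grid terms into products of probabilities, and the
  two-sided Gaussian tail is P(|V| >= t) <= 2 Q(t/sigma).
*)

definition grid_window :: "real \<Rightarrow> real \<Rightarrow> real set" where
  "grid_window d w = (\<Union>i::int. {real_of_int i * d - w/2 .. real_of_int i * d + w/2})"

lemma grid_window_borel [measurable]: "grid_window d w \<in> sets borel"
  unfolding grid_window_def by measurable

lemma borel_measurable_quant [measurable]: "quant d \<in> borel_measurable borel"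
  unfolding quant_def[abs_def] by measurable

lemma quant_residual: "d \<noteq> 0 \<Longrightarrow> x - quant d x = d * (x/d - real_of_int \<lfloor>x/d + 1/2\<rfloor>)"
  unfolding quant_def by (simp add: algebra_simps)

lemma abs_quant_residual_le: "d \<noteq> 0 \<Longrightarrow> \<bar>x - quant d x\<bar> \<le> \<bar>d\<bar>/2"
proof -
  assume "d \<noteq> 0"
  have "\<bar>x/d - real_of_int \<lfloor>x/d + 1/2\<rfloor>\<bar> \<le> 1/2" by linarith
  then have "\<bar>d\<bar> * \<bar>x/d - real_of_int \<lfloor>x/d + 1/2\<rfloor>\<bar> \<le> \<bar>d\<bar> * (1/2)"
    by (intro mult_left_mono) auto
  then show ?thesis using quant_residual[OF \<open>d \<noteq> 0\<close>, of x] by (simp add: abs_mult)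
qed

lemma abs_quant_residual_le_in_grid_window:
  assumes "w < \<bar>d\<bar>" and "x \<in> grid_window d w"
  shows "\<bar>x - quant d x\<bar> \<le> w/2"
proof -
  obtain i :: int where "real_of_int i * d - w/2 \<le> x" "x \<le> real_of_int i * d + w/2"
    using assms(2) unfolding grid_window_def by auto
  then have i: "\<bar>x - real_of_int i * d\<bar> \<le> w/2" by (simp only: abs_le_iff) linarith
  then have "d \<noteq> 0" using assms(1) by auto
  have "\<bar>x/d - real_of_int i\<bar> * \<bar>d\<bar> = \<bar>x - real_of_int i * d\<bar>"
    using \<open>d \<noteq> 0\<close> by (simp add: abs_mult[symmetric] left_diff_distrib)
  then have "\<bar>x/d - real_of_int i\<bar> * \<bar>d\<bar> < (1/2) * \<bar>d\<bar>"
    using i assms(1) by linarith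
  moreover have "\<bar>d\<bar> > 0" using \<open>d \<noteq> 0\<close> by simp
  ultimately have "\<bar>x/d - real_of_int i\<bar> < 1/2" by (simp only: mult_less_cancel_right_pos)
  then have "real_of_int i \<le> x/d + 1/2" "x/d + 1/2 < real_of_int i + 1"
    unfolding abs_less_iff by linarith+
  then have "\<lfloor>x/d + 1/2\<rfloor> = i" by (rule floor_unique)
  then have "quant d x = real_of_int i * d" unfolding quant_def by simp
  then show ?thesis using i by simp
qed

lemma quant_add: "quant d (x + v) = quant d x + real_of_int (\<lfloor>(x+v)/d + 1/2\<rfloor> - \<lfloor>x/d + 1/2\<rfloor>) * d"
  unfolding quant_def by (simp add: algebra_simps)

lemma quant_add_cases:
  assumes "d \<noteq> 0" and "\<bar>x - quant d x\<bar> \<le> B"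
  obtains "quant d (x + v) = quant d x"
    | n :: nat where "\<bar>x - quant d (x + v)\<bar> \<le> real (n+1) * \<bar>d\<bar> + B"
        and "(real n + 1/2) * \<bar>d\<bar> - B \<le> \<bar>v\<bar>"
proof (cases "\<lfloor>(x+v)/d + 1/2\<rfloor> = \<lfloor>x/d + 1/2\<rfloor>")
  case True
  then show ?thesis using that(1) quant_add[of d x v] by simp
next
  case False
  define k where "k = \<lfloor>(x+v)/d + 1/2\<rfloor> - \<lfloor>x/d + 1/2\<rfloor>"
  have shift: "quant d (x + v) = quant d x + real_of_int k * d"
    unfolding k_def by (rule quant_add)
  define n where "n = nat \<bar>k\<bar> - 1"
  have n: "real n + 1 = \<bar>real_of_int k\<bar>"
    using False unfolding n_def k_def by (simp add: of_nat_diff)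
  have "\<bar>x - quant d (x + v)\<bar> \<le> \<bar>real_of_int k\<bar> * \<bar>d\<bar> + B"
    using shift assms(2) abs_triangle_ineq4[of "x - quant d x" "real_of_int k * d"]
    by (simp add: abs_mult)
  moreover have "\<bar>real_of_int k\<bar> * \<bar>d\<bar> \<le> B + \<bar>v\<bar> + \<bar>d\<bar>/2"
  proof -
    have "\<bar>real_of_int k\<bar> * \<bar>d\<bar> = \<bar>(x - quant d x) + v - ((x + v) - quant d (x + v))\<bar>"
      using shift by (simp add: abs_mult[symmetric])
    also have "\<dots> \<le> \<bar>x - quant d x\<bar> + \<bar>v\<bar> + \<bar>(x + v) - quant d (x + v)\<bar>"
      by (intro abs_triangle_ineq4[THEN order_trans] add_right_mono abs_triangle_ineq)
    finally show ?thesis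
      using assms(2) abs_quant_residual_le[OF assms(1), of "x + v"] by linarith
  qed
  moreover have "(real n + 1/2) * \<bar>d\<bar> = \<bar>real_of_int k\<bar> * \<bar>d\<bar> - \<bar>d\<bar>/2"
    unfolding n[symmetric] by (simp add: algebra_simps)
  ultimately show ?thesis
    using that(2)[of n] n by (simp add: algebra_simps)
qed

lemma ennreal_le_suminf: "f n \<le> (\<Sum>n. f n :: ennreal)"
  using sum_le_suminf[of f "{n}"] by simp

lemma sq_quant_noise_error_le:
  fixes x v d w :: real
  assumes "0 \<le> w" and "w < \<bar>d\<bar>"
  shows "ennreal ((x - quant d (x + v))\<^sup>2) \<le> ennreal ((x - quant d x)\<^sup>2)
    + (\<Sum>n. ennreal ((real (n+1) * \<bar>d\<bar> + w/2)\<^sup>2)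
              * indicator {u. ((2 * real (n+1) - 1) * \<bar>d\<bar> - w) / 2 \<le> \<bar>u\<bar>} v)
    + (ennreal ((d + d/2)\<^sup>2) * indicator (- grid_window d w) x
       + (\<Sum>n. ennreal ((real (n+2) * d + d/2)\<^sup>2)
              * (indicator (- grid_window d w) x * indicator {u. (real (n+2) - 1) * \<bar>d\<bar> \<le> \<bar>u\<bar>} v)))"
    (is "?err \<le> _ + ?S1 + (?C + ?S2)")
proof -
  have "d \<noteq> 0" using assms by auto
  have sq_le: "(x - quant d (x + v))\<^sup>2 \<le> r\<^sup>2" if "\<bar>x - quant d (x + v)\<bar> \<le> r" for r
    using that by (simp add: abs_le_square_iff[symmetric])
  have unchanged: ?thesis if "quant d (x + v) = quant d x"
    using that by (simp add: add.assoc add_increasing2)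
  show ?thesis
  proof (cases "x \<in> grid_window d w")
    case True
    have "\<bar>x - quant d x\<bar> \<le> w/2"
      by (rule abs_quant_residual_le_in_grid_window[OF assms(2) True])
    then show ?thesis
    proof (rule quant_add_cases[OF \<open>d \<noteq> 0\<close>, where v = v])
      fix n
      assume err: "\<bar>x - quant d (x + v)\<bar> \<le> real (n+1) * \<bar>d\<bar> + w/2"
        and noise: "(real n + 1/2) * \<bar>d\<bar> - w/2 \<le> \<bar>v\<bar>"
      have "((2 * real (n+1) - 1) * \<bar>d\<bar> - w) / 2 \<le> \<bar>v\<bar>"
        using noise by (simp add: field_simps)
      then have "?err \<le> ennreal ((real (n+1) * \<bar>d\<bar> + w/2)\<^sup>2)
              * indicator {u. ((2 * real (n+1) - 1) * \<bar>d\<bar> - w) / 2 \<le> \<bar>u\<bar>} v"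
        using sq_le[OF err] by (simp add: ennreal_leI)
      also have "\<dots> \<le> ?S1" by (rule ennreal_le_suminf)
      finally show ?thesis by (simp add: add_increasing add_increasing2)
    qed (rule unchanged)
  next
    case False
    show ?thesis
    proof (rule quant_add_cases[OF \<open>d \<noteq> 0\<close> abs_quant_residual_le[OF \<open>d \<noteq> 0\<close>, of x], where v = v])
      fix n
      assume err: "\<bar>x - quant d (x + v)\<bar> \<le> real (n+1) * \<bar>d\<bar> + \<bar>d\<bar>/2"
        and noise: "(real n + 1/2) * \<bar>d\<bar> - \<bar>d\<bar>/2 \<le> \<bar>v\<bar>"
      show ?thesis
      proof (cases n)
        case 0
        have "(real (n+1) * \<bar>d\<bar> + \<bar>d\<bar>/2)\<^sup>2 = (d + d/2)\<^sup>2"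
          unfolding 0 by (simp add: power2_eq_square abs_mult_self_eq)
        then have "?err \<le> ?C" using sq_le[OF err] False by (simp add: ennreal_leI)
        then show ?thesis by (simp add: add_increasing add_increasing2)
      next
        case (Suc m)
        have "(real (n+1) * \<bar>d\<bar> + \<bar>d\<bar>/2)\<^sup>2 = (real (m+2) * d + d/2)\<^sup>2"
          unfolding Suc by (simp add: power2_eq_square algebra_simps abs_mult_self_eq)
        moreover have "(real (m+2) - 1) * \<bar>d\<bar> \<le> \<bar>v\<bar>"
          using noise unfolding Suc by (simp add: algebra_simps)
        ultimately have "?err \<le> ennreal ((real (m+2) * d + d/2)\<^sup>2)
            * (indicator (- grid_window d w) x * indicator {u. (real (m+2) - 1) * \<bar>d\<bar> \<le> \<bar>u\<bar>} v)"
          using sq_le[OF err] False by (simp add: ennreal_leI)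
        also have "\<dots> \<le> ?S2" by (rule ennreal_le_suminf)
        finally show ?thesis by (simp add: add_increasing add_increasing2)
      qed
    qed (rule unchanged)
  qed
qed

lemma (in prob_space) prob_std_normal_ge:
  assumes "distributed M lborel Z std_normal_density"
  shows "prob {\<omega> \<in> space M. a \<le> Z \<omega>} = gaussQ a"
proof -
  have [measurable]: "Z \<in> borel_measurable M"
    using distributed_measurable[OF assms] by simp
  have "prob {\<omega> \<in> space M. a \<le> Z \<omega>} = (\<integral>\<omega>. indicator {\<omega> \<in> space M. a \<le> Z \<omega>} \<omega> \<partial>M)"
    by (simp add: Int_absorb2 Collect_subset)
  also have "\<dots> = (\<integral>\<omega>. indicator {a..} (Z \<omega>) \<partial>M)"
    by (intro Bochner_Integration.integral_cong) (auto simp: indicator_def)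
  also have "\<dots> = (\<integral>x. std_normal_density x * indicator {a..} x \<partial>lborel)"
    by (rule distributed_integral[OF assms, symmetric]) (auto simp: normal_density_def)
  also have "\<dots> = gaussQ a"
    unfolding gaussQ_def set_lebesgue_integral_def integral_mult_right_zero[symmetric]
    by (intro Bochner_Integration.integral_cong) (auto simp: std_normal_density_def indicator_def)
  finally show ?thesis .
qed

lemma (in prob_space) prob_normal_abs_ge_le:
  assumes "distributed M lborel V (normal_density 0 \<sigma>)" and "\<sigma> > 0"
  shows "prob {\<omega> \<in> space M. t \<le> \<bar>V \<omega>\<bar>} \<le> 2 * gaussQ (t / \<sigma>)"
proof -
  have [measurable]: "V \<in> borel_measurable M"
    using distributed_measurable[OF assms(1)] by simp
  have tail: "prob {\<omega> \<in> space M. t / \<sigma> \<le> s / \<sigma> * V \<omega>} = gaussQ (t / \<sigma>)"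
    if "\<bar>s\<bar> = 1" for s
  proof (rule prob_std_normal_ge)
    show "distributed M lborel (\<lambda>\<omega>. s / \<sigma> * V \<omega>) std_normal_density"
      using normal_density_affine[OF assms, of "s / \<sigma>" 0] that assms(2)
      by (simp add: abs_divide)
  qed
  have abs_split: "t / \<sigma> \<le> 1 / \<sigma> * v \<or> t / \<sigma> \<le> -1 / \<sigma> * v" if "t \<le> \<bar>v\<bar>" for v
  proof (cases "v \<ge> 0")
    case True
    then show ?thesis using that divide_right_mono[of t v \<sigma>] assms(2) by simp
  next
    case False
    then show ?thesis using that divide_right_mono[of t "- v" \<sigma>] assms(2) by simp
  qed
  let ?A = "{\<omega> \<in> space M. t / \<sigma> \<le> 1 / \<sigma> * V \<omega>}"
  let ?B = "{\<omega> \<in> space M. t / \<sigma> \<le> -1 / \<sigma> * V \<omega>}"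
  have "{\<omega> \<in> space M. t \<le> \<bar>V \<omega>\<bar>} \<subseteq> ?A \<union> ?B"
  proof
    fix \<omega> assume "\<omega> \<in> {\<omega> \<in> space M. t \<le> \<bar>V \<omega>\<bar>}"
    then show "\<omega> \<in> ?A \<union> ?B" using abs_split[of "V \<omega>"] by simp
  qed
  then have "prob {\<omega> \<in> space M. t \<le> \<bar>V \<omega>\<bar>} \<le> prob (?A \<union> ?B)"
    by (rule finite_measure_mono) measurable
  also have "\<dots> \<le> prob ?A + prob ?B"
    by (rule measure_Un_le) measurable
  finally show ?thesis using tail[of 1] tail[of "-1"] by simp
qed

lemma nn_integral_indicator_comp:
  assumes "X \<in> measurable M N" and "A \<in> sets N"
  shows "(\<integral>\<^sup>+\<omega>. indicator A (X \<omega>) \<partial>M) = emeasure M {\<omega> \<in> space M. X \<omega> \<in> A}"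
proof -
  have "X -` A \<inter> space M = {\<omega> \<in> space M. X \<omega> \<in> A}" by auto
  then show ?thesis
    using measurable_sets[OF assms] by (simp add: nn_integral_indicator' flip: indicator_vimage)
qed

lemma (in prob_space) nn_integral_indep_indicator_mult:
  assumes "indep_var N X N' Y" and "A \<in> sets N" and "B \<in> sets N'"
  shows "(\<integral>\<^sup>+\<omega>. indicator A (X \<omega>) * indicator B (Y \<omega>) \<partial>M)
    = emeasure M {\<omega> \<in> space M. X \<omega> \<in> A} * emeasure M {\<omega> \<in> space M. Y \<omega> \<in> B}"
proof -
  have X: "X \<in> measurable M N" and Y: "Y \<in> measurable M N'"
    using indep_var_rv1[OF assms(1)] indep_var_rv2[OF assms(1)] by simp_all
  have "(\<integral>\<^sup>+\<omega>. indicator A (X \<omega>) * indicator B (Y \<omega>) \<partial>M)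
      = (\<integral>\<^sup>+\<omega>. indicator (A \<times> B) (X \<omega>, Y \<omega>) \<partial>M)"
    by (simp add: indicator_times)
  also have "\<dots> = emeasure M ((\<lambda>\<omega>. (X \<omega>, Y \<omega>)) -` (A \<times> B) \<inter> space M)"
    using nn_integral_indicator_comp[OF measurable_Pair[OF X Y], of "A \<times> B"] assms(2,3)
    by (simp add: vimage_def Int_def conj_commute)
  also have "\<dots> = emeasure M (X -` A \<inter> space M) * emeasure M (Y -` B \<inter> space M)"
    using indep_varD[OF assms] by (simp add: emeasure_eq_measure ennreal_mult)
  also have "\<dots> = emeasure M {\<omega> \<in> space M. X \<omega> \<in> A} * emeasure M {\<omega> \<in> space M. Y \<omega> \<in> B}"
    by (simp add: vimage_def Int_def conj_commute)
  finally show ?thesis .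
qed

lemma (in prob_space) nn_integral_quant_noise_error_le:
  assumes indep: "indep_var borel X borel V" and "0 \<le> w" and "w < \<bar>d\<bar>"
  shows "(\<integral>\<^sup>+\<omega>. ennreal ((X \<omega> - quant d (X \<omega> + V \<omega>))\<^sup>2) \<partial>M)
    \<le> (\<integral>\<^sup>+\<omega>. ennreal ((X \<omega> - quant d (X \<omega>))\<^sup>2) \<partial>M)
      + (\<Sum>n. ennreal ((real (n+1) * \<bar>d\<bar> + w/2)\<^sup>2)
              * emeasure M {\<omega> \<in> space M. ((2 * real (n+1) - 1) * \<bar>d\<bar> - w) / 2 \<le> \<bar>V \<omega>\<bar>})
      + (ennreal ((d + d/2)\<^sup>2) * emeasure M {\<omega> \<in> space M. X \<omega> \<notin> grid_window d w}
         + (\<Sum>n. ennreal ((real (n+2) * d + d/2)\<^sup>2)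
              * (emeasure M {\<omega> \<in> space M. X \<omega> \<notin> grid_window d w}
                 * emeasure M {\<omega> \<in> space M. (real (n+2) - 1) * \<bar>d\<bar> \<le> \<bar>V \<omega>\<bar>})))"
    (is "_ \<le> ?rhs")
proof -
  have [measurable]: "X \<in> borel_measurable M" "V \<in> borel_measurable M"
    using indep_var_rv1[OF indep] indep_var_rv2[OF indep] by simp_all
  have [simp]: "- grid_window d w \<in> sets borel" "{v::real. t \<le> \<bar>v\<bar>} \<in> sets borel" for t
    by measurable
  have "(\<integral>\<^sup>+\<omega>. ennreal ((X \<omega> - quant d (X \<omega> + V \<omega>))\<^sup>2) \<partial>M)
      \<le> (\<integral>\<^sup>+\<omega>. ennreal ((X \<omega> - quant d (X \<omega>))\<^sup>2)
          + (\<Sum>n. ennreal ((real (n+1) * \<bar>d\<bar> + w/2)\<^sup>2)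
              * indicator {u. ((2 * real (n+1) - 1) * \<bar>d\<bar> - w) / 2 \<le> \<bar>u\<bar>} (V \<omega>))
          + (ennreal ((d + d/2)\<^sup>2) * indicator (- grid_window d w) (X \<omega>)
             + (\<Sum>n. ennreal ((real (n+2) * d + d/2)\<^sup>2)
                 * (indicator (- grid_window d w) (X \<omega>)
                    * indicator {u. (real (n+2) - 1) * \<bar>d\<bar> \<le> \<bar>u\<bar>} (V \<omega>)))) \<partial>M)"
    using assms(2,3) by (intro nn_integral_mono sq_quant_noise_error_le)
  also have "\<dots> = ?rhs"
    by (simp add: nn_integral_add nn_integral_suminf nn_integral_cmult
        nn_integral_indicator_comp[where N = borel] nn_integral_indep_indicator_mult[OF indep])
  finally show ?thesis .
qed

lemma ennreal_suminf_mult_le: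
  assumes "\<And>n. 0 \<le> a n" and "\<And>n. p n \<le> ennreal (q n)"
  shows "(\<Sum>n. ennreal (a n) * p n) \<le> (\<Sum>n. ennreal (a n * q n))"
  using assms by (intro suminf_le summableI) (simp add: ennreal_mult' mult_left_mono)

lemma (in prob_space) nn_integral_quant_noise_error_le_tail:
  assumes "indep_var borel X borel V" and "0 \<le> w" and "w < \<bar>d\<bar>" and "0 \<le> ov"
    and off_grid: "prob {\<omega> \<in> space M. X \<omega> \<notin> grid_window d w} \<le> ov"
    and tail: "\<And>t. prob {\<omega> \<in> space M. t \<le> \<bar>V \<omega>\<bar>} \<le> q t"
  shows "(\<integral>\<^sup>+\<omega>. ennreal ((X \<omega> - quant d (X \<omega> + V \<omega>))\<^sup>2) \<partial>M)
    \<le> (\<integral>\<^sup>+\<omega>. ennreal ((X \<omega> - quant d (X \<omega>))\<^sup>2) \<partial>M)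
      + (\<Sum>n. ennreal ((real (n+1) * \<bar>d\<bar> + w/2)\<^sup>2 * q (((2 * real (n+1) - 1) * \<bar>d\<bar> - w) / 2)))
      + ennreal ov * (ennreal ((d + d/2)\<^sup>2)
          + (\<Sum>n. ennreal ((real (n+2) * d + d/2)\<^sup>2 * q ((real (n+2) - 1) * \<bar>d\<bar>))))"
proof -
  define pX where "pX = emeasure M {\<omega> \<in> space M. X \<omega> \<notin> grid_window d w}"
  define pV where "pV t = emeasure M {\<omega> \<in> space M. t \<le> \<bar>V \<omega>\<bar>}" for t
  have pX_le: "pX \<le> ennreal ov"
    using off_grid unfolding pX_def by (simp add: emeasure_eq_measure ennreal_leI)
  have pV_le: "pV t \<le> ennreal (q t)" for t
    using tail[of t] unfolding pV_def by (simp add: emeasure_eq_measure ennreal_leI)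
  have "(\<Sum>n. ennreal ((real (n+2) * d + d/2)\<^sup>2) * (pX * pV ((real (n+2) - 1) * \<bar>d\<bar>)))
      \<le> (\<Sum>n. ennreal ((real (n+2) * d + d/2)\<^sup>2 * (ov * q ((real (n+2) - 1) * \<bar>d\<bar>))))"
    using mult_mono[OF pX_le pV_le] \<open>0 \<le> ov\<close>
    by (intro ennreal_suminf_mult_le) (simp_all add: ennreal_mult')
  also have "\<dots> = ennreal ov * (\<Sum>n. ennreal ((real (n+2) * d + d/2)\<^sup>2 * q ((real (n+2) - 1) * \<bar>d\<bar>)))"
    using \<open>0 \<le> ov\<close> by (simp add: ennreal_mult' mult_ac flip: ennreal_suminf_cmult)
  finally have off_grid_terms: "(\<Sum>n. ennreal ((real (n+2) * d + d/2)\<^sup>2) * (pX * pV ((real (n+2) - 1) * \<bar>d\<bar>)))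
      \<le> ennreal ov * (\<Sum>n. ennreal ((real (n+2) * d + d/2)\<^sup>2 * q ((real (n+2) - 1) * \<bar>d\<bar>)))" .
  have on_grid_terms: "(\<Sum>n. ennreal ((real (n+1) * \<bar>d\<bar> + w/2)\<^sup>2) * pV (((2 * real (n+1) - 1) * \<bar>d\<bar> - w) / 2))
      \<le> (\<Sum>n. ennreal ((real (n+1) * \<bar>d\<bar> + w/2)\<^sup>2 * q (((2 * real (n+1) - 1) * \<bar>d\<bar> - w) / 2)))"
    by (intro ennreal_suminf_mult_le pV_le) simp
  have "ennreal ((d + d/2)\<^sup>2) * pX \<le> ennreal ov * ennreal ((d + d/2)\<^sup>2)"
    using mult_left_mono[OF pX_le, of "ennreal ((d + d/2)\<^sup>2)"] by (simp add: ac_simps)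
  with on_grid_terms off_grid_terms show ?thesis
    using nn_integral_quant_noise_error_le[OF assms(1-3)] unfolding distrib_left pX_def pV_def
    by (elim order_trans) (intro add_mono order_refl)
qed

theorem lemma6:
  fixes M :: "'a measure" and X V :: "'a \<Rightarrow> real" and d w ov \<sigma> :: real
  assumes "prob_space M"
    and "X \<in> borel_measurable M" and "V \<in> borel_measurable M"
    and "prob_space.indep_var M borel X borel V"
    and "\<sigma> > 0"
    and "distributed M lborel V (normal_density 0 \<sigma>)"
    and "d \<noteq> 0" and "w \<ge> 0" and "ov \<ge> 0" and "\<bar>d\<bar> > w"
    and "df_le M X d w ov"
  shows "(\<integral>\<^sup>+ \<omega>. ennreal ((X \<omega> - quant d (X \<omega> + V \<omega>))\<^sup>2) \<partial>M)
    \<le> (\<integral>\<^sup>+ \<omega>. ennreal ((X \<omega> - quant d (X \<omega>))\<^sup>2) \<partial>M)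
      + (\<Sum>n. ennreal ((real (n+1) * \<bar>d\<bar> + w/2)\<^sup>2 * 2 *
              gaussQ (((2 * real (n+1) - 1) * \<bar>d\<bar> - w) / (2 * \<sigma>))))
      + ennreal ov * (ennreal ((d + d/2)\<^sup>2)
          + (\<Sum>n. ennreal ((real (n+2) * d + d/2)\<^sup>2 * 2 *
              gaussQ ((real (n+2) - 1) * \<bar>d\<bar> / \<sigma>))))"
proof -
  interpret prob_space M by fact
  have "prob {\<omega> \<in> space M. X \<omega> \<notin> grid_window d w} \<le> ov"
    using assms(11) unfolding df_le_def grid_window_def .
  from nn_integral_quant_noise_error_le_tail[OF assms(4,8,10,9) this
      prob_normal_abs_ge_le[OF assms(6,5)]]
  show ?thesis by (simp only: mult.assoc divide_divide_eq_left mult.commute[of 2 \<sigma>])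
qed

end
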